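(* Let $\mathcal W_1$ be a discrete memoryless channel from $\mathcal X_1$ to $\mathcal Y_1$ and $\mathcal W_2$ one from $\mathcal X_2$ to $\mathcal Y_2$ (all finite sets), and let $(\mathcal W_1\times\mathcal W_2)(y_1,y_2|x_1,x_2)=\mathcal W_1(y_1|x_1)\mathcal W_2(y_2|x_2)$. Then $U(\mathcal W_1\times\mathcal W_2)=U(\mathcal W_1)+U(\mathcal W_2)$.
   Context: $D(P\|Q)=\sum P\log(P/Q)$ ($0\log(0/q)=0$; $+\infty$ if $P\not\ll Q$). For a channel $\mathcal W$ from $\mathcal X$ to $\mathcal Y$, $U(\mathcal W)=\max_{P_X\in\mathcal P(\mathcal X)}\min_{Q_Y\in\mathcal P(\mathcal Y)}D(P_X\times Q_Y\|P_{XY})$ with $P_{XY}(x,y)=P_X(x)\mathcal W(y|x)$. *)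

theory Defs
  imports Complex_Main "HOL-Library.Extended_Real"
begin

definition is_distr :: "('a::finite \<Rightarrow> real) \<Rightarrow> bool" where
  "is_distr P \<longleftrightarrow> (\<forall>a. 0 \<le> P a) \<and> (\<Sum>a\<in>UNIV. P a) = 1"

text \<open>A discrete memoryless channel: W x y = W(y|x).\<close>
definition is_channel :: "('x::finite \<Rightarrow> 'y::finite \<Rightarrow> real) \<Rightarrow> bool" where
  "is_channel W \<longleftrightarrow> (\<forall>x. is_distr (W x))"

definition KL_div :: "('a::finite \<Rightarrow> real) \<Rightarrow> ('a \<Rightarrow> real) \<Rightarrow> ereal" where
  "KL_div P Q = (if (\<forall>a. Q a = 0 \<longrightarrow> P a = 0)
     then ereal (\<Sum>a\<in>UNIV. if P a = 0 then 0 else P a * ln (P a / Q a))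
     else \<infinity>)"

definition U_channel :: "('x::finite \<Rightarrow> 'y::finite \<Rightarrow> real) \<Rightarrow> ereal" where
  "U_channel W = (SUP P\<in>{P. is_distr P}. INF Q\<in>{Q. is_distr Q}.
      KL_div (\<lambda>(x, y). P x * Q y) (\<lambda>(x, y). P x * W x y))"

definition prod_channel ::
  "('x1::finite \<Rightarrow> 'y1::finite \<Rightarrow> real) \<Rightarrow> ('x2::finite \<Rightarrow> 'y2::finite \<Rightarrow> real)
    \<Rightarrow> ('x1 \<times> 'x2) \<Rightarrow> ('y1 \<times> 'y2) \<Rightarrow> real" where
  "prod_channel W1 W2 = (\<lambda>(x1, x2) (y1, y2). W1 x1 y1 * W2 x2 y2)"

end

theory Submission
  imports Defs
begin

text \<open>
  Write \<open>D(W, P, Q) = D(P \<times> Q \<parallel> P\<^sub>X\<^sub>Y)\<close> (\<open>U_div W P Q\<close> below). For the product channel,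
  inputs \<open>P\<close> and outputs \<open>Q\<close> with marginals \<open>P\<^sub>i\<close>, \<open>Q\<^sub>i\<close>, the log-likelihood ratio splits
  into three terms, giving the chain rule
  \<open>D(W\<^sub>1 \<times> W\<^sub>2, P, Q) = D(Q \<parallel> Q\<^sub>1 \<times> Q\<^sub>2) + D(W\<^sub>1, P\<^sub>1, Q\<^sub>1) + D(W\<^sub>2, P\<^sub>2, Q\<^sub>2)\<close> in \<open>[0, \<infinity>]\<close>.
  The first term is nonnegative and vanishes for product laws \<open>Q\<close>, so the infimum over \<open>Q\<close>
  is the sum of the two marginal infima. The supremum over \<open>P\<close> then splits likewise,
  since any pair of marginals is realised by a product law.
\<close>

lemma sum_UNIV_prod:
  "(\<Sum>z\<in>UNIV. f z) = (\<Sum>a\<in>(UNIV::'a::finite set). \<Sum>b\<in>(UNIV::'b::finite set). f (a, b))"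
  by (simp add: sum.cartesian_product)

lemma is_distr_nonneg: "is_distr P \<Longrightarrow> 0 \<le> P a"
  by (simp add: is_distr_def)

lemma is_distr_sum: "is_distr P \<Longrightarrow> (\<Sum>a\<in>UNIV. P a) = 1"
  by (simp add: is_distr_def)

lemma is_distr_ex: "\<exists>P::'a::finite \<Rightarrow> real. is_distr P"
proof
  show "is_distr (\<lambda>_::'a. 1 / real (card (UNIV::'a set)))"
    by (simp add: is_distr_def)
qed

definition abs_cont :: "('a::finite \<Rightarrow> real) \<Rightarrow> ('a \<Rightarrow> real) \<Rightarrow> bool" where
  "abs_cont p q \<longleftrightarrow> (\<forall>a. q a = 0 \<longrightarrow> p a = 0)"

lemma KL_div_abs_cont:
  "abs_cont p q \<Longrightarrow> KL_div p q = ereal (\<Sum>a\<in>UNIV. p a * ln (p a / q a))"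
  unfolding KL_div_def abs_cont_def by (auto intro!: sum.cong)

lemma KL_div_not_abs_cont: "\<not> abs_cont p q \<Longrightarrow> KL_div p q = \<infinity>"
  unfolding KL_div_def abs_cont_def by auto

lemma KL_div_self: "KL_div p p = 0"
  by (simp add: KL_div_abs_cont abs_cont_def zero_ereal_def sum.neutral)

lemma KL_div_nonneg:
  assumes p: "is_distr p" and q: "is_distr q"
  shows "0 \<le> KL_div p q"
proof (cases "abs_cont p q")
  case True
  have "p a - q a \<le> p a * ln (p a / q a)" for a
  proof (cases "p a = 0")
    case True
    then show ?thesis using is_distr_nonneg[OF q] by simp
  next
    case False
    then have "0 < p a" "0 < q a"
      using \<open>abs_cont p q\<close> is_distr_nonneg[OF p, of a] is_distr_nonneg[OF q, of a]
      by (auto simp: abs_cont_def order_le_less)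
    then have "p a * (1 - q a / p a) \<le> p a * - ln (q a / p a)"
      using ln_le_minus_one[of "q a / p a"] by (intro mult_left_mono) auto
    with \<open>0 < p a\<close> \<open>0 < q a\<close> show ?thesis
      by (simp add: ln_div algebra_simps)
  qed
  then have "(\<Sum>a\<in>UNIV. p a - q a) \<le> (\<Sum>a\<in>UNIV. p a * ln (p a / q a))"
    by (rule sum_mono)
  then show ?thesis
    using True p q by (simp add: KL_div_abs_cont sum_subtractf is_distr_def)
qed (simp add: KL_div_not_abs_cont)

definition marg_fst :: "('a::finite \<times> 'b::finite \<Rightarrow> real) \<Rightarrow> 'a \<Rightarrow> real" where
  "marg_fst P a = (\<Sum>b\<in>UNIV. P (a, b))"

definition marg_snd :: "('a::finite \<times> 'b::finite \<Rightarrow> real) \<Rightarrow> 'b \<Rightarrow> real" where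
  "marg_snd P b = (\<Sum>a\<in>UNIV. P (a, b))"

definition product_distr :: "('a \<Rightarrow> real) \<Rightarrow> ('b \<Rightarrow> real) \<Rightarrow> 'a \<times> 'b \<Rightarrow> real" where
  "product_distr P Q = (\<lambda>(a, b). P a * Q b)"

definition joint_distr :: "('x \<Rightarrow> real) \<Rightarrow> ('x \<Rightarrow> 'y \<Rightarrow> real) \<Rightarrow> 'x \<times> 'y \<Rightarrow> real" where
  "joint_distr P W = (\<lambda>(x, y). P x * W x y)"

lemma is_distr_product:
  "is_distr P \<Longrightarrow> is_distr Q \<Longrightarrow> is_distr (product_distr P Q)"
  unfolding is_distr_def product_distr_def
  by (simp add: sum_UNIV_prod sum_distrib_left[symmetric] sum_distrib_right[symmetric])

lemma is_distr_joint:
  "is_distr P \<Longrightarrow> is_channel W \<Longrightarrow> is_distr (joint_distr P W)"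
  unfolding is_channel_def is_distr_def joint_distr_def
  by (simp add: sum_UNIV_prod sum_distrib_left[symmetric])

lemma is_distr_marg_fst: "is_distr P \<Longrightarrow> is_distr (marg_fst P)"
  unfolding is_distr_def marg_fst_def by (simp add: sum_nonneg sum_UNIV_prod[symmetric])

lemma is_distr_marg_snd: "is_distr P \<Longrightarrow> is_distr (marg_snd P)"
  unfolding is_distr_def marg_snd_def
  by (auto intro: sum_nonneg simp: sum_UNIV_prod[symmetric] sum.swap[of _ UNIV UNIV])

lemma marg_fst_product: "is_distr Q \<Longrightarrow> marg_fst (product_distr P Q) = P"
  unfolding is_distr_def product_distr_def marg_fst_def by (simp add: sum_distrib_left[symmetric])

lemma marg_snd_product: "is_distr P \<Longrightarrow> marg_snd (product_distr P Q) = Q"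
  unfolding is_distr_def product_distr_def marg_snd_def by (simp add: sum_distrib_right[symmetric])

lemma marg_fst_eq_0_iff: "is_distr P \<Longrightarrow> marg_fst P a = 0 \<longleftrightarrow> (\<forall>b. P (a, b) = 0)"
  unfolding marg_fst_def by (simp add: sum_nonneg_eq_0_iff is_distr_nonneg)

lemma marg_snd_eq_0_iff: "is_distr P \<Longrightarrow> marg_snd P b = 0 \<longleftrightarrow> (\<forall>a. P (a, b) = 0)"
  unfolding marg_snd_def by (simp add: sum_nonneg_eq_0_iff is_distr_nonneg)

lemma sum_marg_fst: "(\<Sum>z\<in>UNIV. P z * f (fst z)) = (\<Sum>a\<in>UNIV. marg_fst P a * f a)"
  unfolding marg_fst_def by (simp add: sum_UNIV_prod sum_distrib_right)

lemma sum_marg_snd: "(\<Sum>z\<in>UNIV. P z * f (snd z)) = (\<Sum>b\<in>UNIV. marg_snd P b * f b)"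
  unfolding marg_snd_def by (simp add: sum_UNIV_prod sum_distrib_right) (rule sum.swap)

lemma sum_product_marg_fst:
  "(\<Sum>x\<in>UNIV. \<Sum>y\<in>UNIV. P x * Q y * f (fst x) (fst y))
    = (\<Sum>a\<in>UNIV. \<Sum>b\<in>UNIV. marg_fst P a * marg_fst Q b * f a b)"
proof -
  have inner: "(\<Sum>y\<in>UNIV. Q y * f a (fst y)) = (\<Sum>b\<in>UNIV. marg_fst Q b * f a b)" for a
    by (rule sum_marg_fst)
  have "(\<Sum>x\<in>UNIV. \<Sum>y\<in>UNIV. P x * Q y * f (fst x) (fst y))
      = (\<Sum>x\<in>UNIV. P x * (\<Sum>b\<in>UNIV. marg_fst Q b * f (fst x) b))"
    by (simp add: sum_distrib_left[symmetric] mult.assoc inner)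
  also have "\<dots> = (\<Sum>a\<in>UNIV. marg_fst P a * (\<Sum>b\<in>UNIV. marg_fst Q b * f a b))"
    by (rule sum_marg_fst)
  finally show ?thesis by (simp add: sum_distrib_left mult.assoc)
qed

lemma sum_product_marg_snd:
  "(\<Sum>x\<in>UNIV. \<Sum>y\<in>UNIV. P x * Q y * f (snd x) (snd y))
    = (\<Sum>a\<in>UNIV. \<Sum>b\<in>UNIV. marg_snd P a * marg_snd Q b * f a b)"
proof -
  have inner: "(\<Sum>y\<in>UNIV. Q y * f a (snd y)) = (\<Sum>b\<in>UNIV. marg_snd Q b * f a b)" for a
    by (rule sum_marg_snd)
  have "(\<Sum>x\<in>UNIV. \<Sum>y\<in>UNIV. P x * Q y * f (snd x) (snd y))
      = (\<Sum>x\<in>UNIV. P x * (\<Sum>b\<in>UNIV. marg_snd Q b * f (snd x) b))"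
    by (simp add: sum_distrib_left[symmetric] mult.assoc inner)
  also have "\<dots> = (\<Sum>a\<in>UNIV. marg_snd P a * (\<Sum>b\<in>UNIV. marg_snd Q b * f a b))"
    by (rule sum_marg_snd)
  finally show ?thesis by (simp add: sum_distrib_left mult.assoc)
qed

lemma marg_fst_image: "marg_fst ` {P::'a::finite \<times> 'b::finite \<Rightarrow> real. is_distr P} = {P. is_distr P}"
proof -
  obtain Q :: "'b \<Rightarrow> real" where "is_distr Q" using is_distr_ex by blast
  then have "P = marg_fst (product_distr P Q)" "is_distr (product_distr P Q)" if "is_distr P" for P
    using that by (simp_all add: marg_fst_product is_distr_product)
  then show ?thesis by (auto simp: is_distr_marg_fst image_iff)
qed

lemma marg_snd_image: "marg_snd ` {P::'a::finite \<times> 'b::finite \<Rightarrow> real. is_distr P} = {P. is_distr P}"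
proof -
  obtain Q :: "'a \<Rightarrow> real" where "is_distr Q" using is_distr_ex by blast
  then have "P = marg_snd (product_distr Q P)" "is_distr (product_distr Q P)" if "is_distr P" for P
    using that by (simp_all add: marg_snd_product is_distr_product)
  then show ?thesis by (auto simp: is_distr_marg_snd image_iff)
qed

lemma product_of_marginals:
  assumes "is_distr P" "is_distr Q"
  shows "is_distr (product_distr (marg_fst P) (marg_snd Q))"
    and "marg_fst (product_distr (marg_fst P) (marg_snd Q)) = marg_fst P"
    and "marg_snd (product_distr (marg_fst P) (marg_snd Q)) = marg_snd Q"
  using assms by (simp_all add: is_distr_product is_distr_marg_fst is_distr_marg_snd
      marg_fst_product marg_snd_product)

lemma INF_marginals_add:
  fixes f :: "('a::finite \<Rightarrow> real) \<Rightarrow> ereal" and g :: "('b::finite \<Rightarrow> real) \<Rightarrow> ereal"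
  assumes f: "\<And>P. is_distr P \<Longrightarrow> 0 \<le> f P" and g: "\<And>P. is_distr P \<Longrightarrow> 0 \<le> g P"
  shows "(INF R\<in>{R. is_distr R}. f (marg_fst R) + g (marg_snd R))
    = (INF P\<in>{P. is_distr P}. f P) + (INF Q\<in>{Q. is_distr Q}. g Q)"
proof -
  have "(INF R\<in>{R. is_distr R}. f (marg_fst R) + g (marg_snd R))
      = (INF R\<in>{R::'a \<times> 'b \<Rightarrow> real. is_distr R}. f (marg_fst R))
        + (INF R\<in>{R::'a \<times> 'b \<Rightarrow> real. is_distr R}. g (marg_snd R))"
  proof (rule INF_ereal_add_directed[where f = "\<lambda>R. f (marg_fst R)" and g = "\<lambda>R. g (marg_snd R)"])
    fix R R' :: "'a \<times> 'b \<Rightarrow> real" assume "R \<in> {R. is_distr R}" "R' \<in> {R. is_distr R}"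
    then show "\<exists>S\<in>{R. is_distr R}. f (marg_fst R) + g (marg_snd R') \<ge> f (marg_fst S) + g (marg_snd S)"
      using product_of_marginals[of R R'] by force
  qed (auto intro!: f g is_distr_marg_fst is_distr_marg_snd)
  then show ?thesis
    by (simp only: image_image[of f marg_fst, symmetric] image_image[of g marg_snd, symmetric]
        marg_fst_image marg_snd_image)
qed

lemma SUP_marginals_add:
  fixes f :: "('a::finite \<Rightarrow> real) \<Rightarrow> ereal" and g :: "('b::finite \<Rightarrow> real) \<Rightarrow> ereal"
  assumes f: "\<And>P. is_distr P \<Longrightarrow> 0 \<le> f P" and g: "\<And>P. is_distr P \<Longrightarrow> 0 \<le> g P"
  shows "(SUP R\<in>{R. is_distr R}. f (marg_fst R) + g (marg_snd R))
    = (SUP P\<in>{P. is_distr P}. f P) + (SUP Q\<in>{Q. is_distr Q}. g Q)"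
proof -
  have "(SUP R\<in>{R. is_distr R}. f (marg_fst R) + g (marg_snd R))
      = (SUP R\<in>{R::'a \<times> 'b \<Rightarrow> real. is_distr R}. f (marg_fst R))
        + (SUP R\<in>{R::'a \<times> 'b \<Rightarrow> real. is_distr R}. g (marg_snd R))"
  proof (rule SUP_ereal_add_directed[where f = "\<lambda>R. f (marg_fst R)" and g = "\<lambda>R. g (marg_snd R)"])
    fix R R' :: "'a \<times> 'b \<Rightarrow> real" assume "R \<in> {R. is_distr R}" "R' \<in> {R. is_distr R}"
    then show "\<exists>S\<in>{R. is_distr R}. f (marg_fst R) + g (marg_snd R') \<le> f (marg_fst S) + g (marg_snd S)"
      using product_of_marginals[of R R'] by force
  qed (auto intro!: f g is_distr_marg_fst is_distr_marg_snd)
  then show ?thesis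
    by (simp only: image_image[of f marg_fst, symmetric] image_image[of g marg_snd, symmetric]
        marg_fst_image marg_snd_image)
qed

definition U_div ::
  "('x::finite \<Rightarrow> 'y::finite \<Rightarrow> real) \<Rightarrow> ('x \<Rightarrow> real) \<Rightarrow> ('y \<Rightarrow> real) \<Rightarrow> ereal" where
  "U_div W P Q = KL_div (product_distr P Q) (joint_distr P W)"

definition U_inf :: "('x::finite \<Rightarrow> 'y::finite \<Rightarrow> real) \<Rightarrow> ('x \<Rightarrow> real) \<Rightarrow> ereal" where
  "U_inf W P = (INF Q\<in>{Q. is_distr Q}. U_div W P Q)"

lemma U_channel_eq_SUP_U_inf: "U_channel W = (SUP P\<in>{P. is_distr P}. U_inf W P)"
  by (simp add: U_channel_def U_inf_def U_div_def product_distr_def joint_distr_def)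

lemma U_div_nonneg: "is_channel W \<Longrightarrow> is_distr P \<Longrightarrow> is_distr Q \<Longrightarrow> 0 \<le> U_div W P Q"
  unfolding U_div_def by (intro KL_div_nonneg is_distr_product is_distr_joint)

lemma U_inf_nonneg: "is_channel W \<Longrightarrow> is_distr P \<Longrightarrow> 0 \<le> U_inf W P"
  unfolding U_inf_def by (auto intro: INF_greatest U_div_nonneg)

lemma abs_cont_product_joint:
  "abs_cont (product_distr P Q) (joint_distr P W) \<longleftrightarrow> (\<forall>x y. P x \<noteq> 0 \<longrightarrow> Q y \<noteq> 0 \<longrightarrow> W x y \<noteq> 0)"
  unfolding abs_cont_def product_distr_def joint_distr_def by auto

lemma U_div_abs_cont:
  "abs_cont (product_distr P Q) (joint_distr P W) \<Longrightarrow>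
    U_div W P Q = ereal (\<Sum>x\<in>UNIV. \<Sum>y\<in>UNIV. P x * Q y * ln (P x * Q y / (P x * W x y)))"
  unfolding U_div_def by (simp add: KL_div_abs_cont sum_UNIV_prod product_distr_def joint_distr_def)

lemma abs_cont_prod_channel_iff:
  assumes "is_distr P" "is_distr Q"
  shows "abs_cont (product_distr P Q) (joint_distr P (prod_channel W1 W2)) \<longleftrightarrow>
    abs_cont (product_distr (marg_fst P) (marg_fst Q)) (joint_distr (marg_fst P) W1) \<and>
    abs_cont (product_distr (marg_snd P) (marg_snd Q)) (joint_distr (marg_snd P) W2)"
  using assms unfolding abs_cont_product_joint
  by (simp add: marg_fst_eq_0_iff marg_snd_eq_0_iff prod_channel_def) blast

lemma abs_cont_product_marginals:
  "is_distr Q \<Longrightarrow> abs_cont Q (product_distr (marg_fst Q) (marg_snd Q))"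
  unfolding abs_cont_def product_distr_def by (auto simp: marg_fst_eq_0_iff marg_snd_eq_0_iff)

lemma U_div_prod_channel_abs_cont:
  fixes W1 :: "'x1::finite \<Rightarrow> 'y1::finite \<Rightarrow> real" and W2 :: "'x2::finite \<Rightarrow> 'y2::finite \<Rightarrow> real"
  assumes W1: "is_channel W1" and W2: "is_channel W2" and P: "is_distr P" and Q: "is_distr Q"
    and ac: "abs_cont (product_distr P Q) (joint_distr P (prod_channel W1 W2))"
  defines "P1 \<equiv> marg_fst P" and "P2 \<equiv> marg_snd P" and "Q1 \<equiv> marg_fst Q" and "Q2 \<equiv> marg_snd Q"
  shows "U_div (prod_channel W1 W2) P Q
    = KL_div Q (product_distr Q1 Q2) + U_div W1 P1 Q1 + U_div W2 P2 Q2"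
proof -
  define L0 where "L0 y = ln (Q y / (Q1 (fst y) * Q2 (snd y)))" for y
  define L1 where "L1 a b = ln (P1 a * Q1 b / (P1 a * W1 a b))" for a b
  define L2 where "L2 a b = ln (P2 a * Q2 b / (P2 a * W2 a b))" for a b
  have ac1: "abs_cont (product_distr P1 Q1) (joint_distr P1 W1)"
    and ac2: "abs_cont (product_distr P2 Q2) (joint_distr P2 W2)"
    using ac abs_cont_prod_channel_iff[OF P Q] by (simp_all add: P1_def P2_def Q1_def Q2_def)
  have pointwise: "P x * Q y * ln (P x * Q y / (P x * prod_channel W1 W2 x y))
      = P x * Q y * L0 y + P x * Q y * L1 (fst x) (fst y) + P x * Q y * L2 (snd x) (snd y)" for x y
  proof (cases "P x = 0 \<or> Q y = 0")
    case False
    obtain x1 x2 y1 y2 where xy: "x = (x1, x2)" "y = (y1, y2)" by fastforce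
    have "0 < P1 x1" "0 < P2 x2" "0 < Q1 y1" "0 < Q2 y2"
      using False xy is_distr_nonneg[OF is_distr_marg_fst[OF P]] is_distr_nonneg[OF is_distr_marg_snd[OF P]]
        is_distr_nonneg[OF is_distr_marg_fst[OF Q]] is_distr_nonneg[OF is_distr_marg_snd[OF Q]]
      by (auto simp: P1_def P2_def Q1_def Q2_def less_le marg_fst_eq_0_iff[OF P]
          marg_snd_eq_0_iff[OF P] marg_fst_eq_0_iff[OF Q] marg_snd_eq_0_iff[OF Q])
    moreover have "0 < P x" "0 < Q y"
      using False is_distr_nonneg[OF P, of x] is_distr_nonneg[OF Q, of y] by auto
    moreover have "0 < W1 x1 y1" "0 < W2 x2 y2"
      using ac False xy W1 W2 unfolding abs_cont_product_joint
      by (auto simp: prod_channel_def is_channel_def less_le is_distr_nonneg)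
    ultimately show ?thesis
      using xy by (simp add: L0_def L1_def L2_def prod_channel_def ln_div ln_mult algebra_simps)
  qed auto
  have sum0: "(\<Sum>x\<in>UNIV. \<Sum>y\<in>UNIV. P x * Q y * L0 y) = (\<Sum>y\<in>UNIV. Q y * L0 y)"
    using is_distr_sum[OF P] by (simp add: sum_product[symmetric] mult.assoc)
  have sum1: "(\<Sum>x\<in>UNIV. \<Sum>y\<in>UNIV. P x * Q y * L1 (fst x) (fst y))
      = (\<Sum>a\<in>UNIV. \<Sum>b\<in>UNIV. P1 a * Q1 b * L1 a b)"
    unfolding P1_def Q1_def by (rule sum_product_marg_fst)
  have sum2: "(\<Sum>x\<in>UNIV. \<Sum>y\<in>UNIV. P x * Q y * L2 (snd x) (snd y))
      = (\<Sum>a\<in>UNIV. \<Sum>b\<in>UNIV. P2 a * Q2 b * L2 a b)"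
    unfolding P2_def Q2_def by (rule sum_product_marg_snd)
  have "U_div (prod_channel W1 W2) P Q = ereal (\<Sum>x\<in>UNIV. \<Sum>y\<in>UNIV.
      P x * Q y * L0 y + P x * Q y * L1 (fst x) (fst y) + P x * Q y * L2 (snd x) (snd y))"
    by (simp only: U_div_abs_cont[OF ac] pointwise)
  also have "\<dots> = ereal (\<Sum>y\<in>UNIV. Q y * L0 y)
      + ereal (\<Sum>a\<in>UNIV. \<Sum>b\<in>UNIV. P1 a * Q1 b * L1 a b)
      + ereal (\<Sum>a\<in>UNIV. \<Sum>b\<in>UNIV. P2 a * Q2 b * L2 a b)"
    by (simp add: sum.distrib sum0 sum1 sum2)
  also have "\<dots> = KL_div Q (product_distr Q1 Q2) + U_div W1 P1 Q1 + U_div W2 P2 Q2"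
  proof -
    have "KL_div Q (product_distr Q1 Q2) = ereal (\<Sum>y\<in>UNIV. Q y * L0 y)"
      using abs_cont_product_marginals[OF Q]
      by (simp add: KL_div_abs_cont L0_def product_distr_def case_prod_beta Q1_def Q2_def)
    then show ?thesis
      by (simp add: U_div_abs_cont[OF ac1] U_div_abs_cont[OF ac2] L1_def L2_def)
  qed
  finally show ?thesis .
qed

lemma U_div_prod_channel:
  assumes W1: "is_channel W1" and W2: "is_channel W2" and P: "is_distr P" and Q: "is_distr Q"
  shows "U_div (prod_channel W1 W2) P Q
    = KL_div Q (product_distr (marg_fst Q) (marg_snd Q))
      + U_div W1 (marg_fst P) (marg_fst Q) + U_div W2 (marg_snd P) (marg_snd Q)"
proof (cases "abs_cont (product_distr P Q) (joint_distr P (prod_channel W1 W2))")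
  case True
  then show ?thesis by (rule U_div_prod_channel_abs_cont[OF assms])
next
  case False
  then have "U_div W1 (marg_fst P) (marg_fst Q) = \<infinity> \<or> U_div W2 (marg_snd P) (marg_snd Q) = \<infinity>"
    using abs_cont_prod_channel_iff[OF P Q] by (auto simp: U_div_def KL_div_not_abs_cont)
  moreover have "0 \<le> KL_div Q (product_distr (marg_fst Q) (marg_snd Q))"
    "0 \<le> U_div W1 (marg_fst P) (marg_fst Q)" "0 \<le> U_div W2 (marg_snd P) (marg_snd Q)"
    using assms by (auto intro!: KL_div_nonneg U_div_nonneg is_distr_product
        is_distr_marg_fst is_distr_marg_snd)
  ultimately show ?thesis
    using False by (auto simp: U_div_def KL_div_not_abs_cont)
qed

lemma U_div_prod_channel_ge:
  assumes "is_channel W1" "is_channel W2" "is_distr P" "is_distr Q"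
  shows "U_div W1 (marg_fst P) (marg_fst Q) + U_div W2 (marg_snd P) (marg_snd Q)
    \<le> U_div (prod_channel W1 W2) P Q"
  using U_div_prod_channel[OF assms] KL_div_nonneg[OF \<open>is_distr Q\<close>
      is_distr_product[OF is_distr_marg_fst is_distr_marg_snd, OF \<open>is_distr Q\<close> \<open>is_distr Q\<close>]]
  by (simp add: add.assoc add_increasing)

lemma U_div_prod_channel_product:
  assumes "is_channel W1" "is_channel W2" "is_distr P" "is_distr Q1" "is_distr Q2"
  shows "U_div (prod_channel W1 W2) P (product_distr Q1 Q2)
    = U_div W1 (marg_fst P) Q1 + U_div W2 (marg_snd P) Q2"
  using assms U_div_prod_channel[OF assms(1-3) is_distr_product[OF assms(4,5)]]
  by (simp add: marg_fst_product marg_snd_product KL_div_self)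

lemma U_inf_prod_channel:
  fixes W1 :: "'x1::finite \<Rightarrow> 'y1::finite \<Rightarrow> real" and W2 :: "'x2::finite \<Rightarrow> 'y2::finite \<Rightarrow> real"
  assumes W1: "is_channel W1" and W2: "is_channel W2" and P: "is_distr P"
  shows "U_inf (prod_channel W1 W2) P = U_inf W1 (marg_fst P) + U_inf W2 (marg_snd P)"
proof -
  have "U_inf (prod_channel W1 W2) P
      = (INF Q\<in>{Q. is_distr Q}. U_div W1 (marg_fst P) (marg_fst Q) + U_div W2 (marg_snd P) (marg_snd Q))"
    unfolding U_inf_def
  proof (rule antisym)
    show "(INF Q\<in>{Q. is_distr Q}. U_div (prod_channel W1 W2) P Q)
        \<le> (INF Q\<in>{Q. is_distr Q}. U_div W1 (marg_fst P) (marg_fst Q) + U_div W2 (marg_snd P) (marg_snd Q))"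
    proof (rule INF_mono)
      fix Q :: "'y1 \<times> 'y2 \<Rightarrow> real" assume "Q \<in> {Q. is_distr Q}"
      then show "\<exists>R\<in>{Q. is_distr Q}. U_div (prod_channel W1 W2) P R
          \<le> U_div W1 (marg_fst P) (marg_fst Q) + U_div W2 (marg_snd P) (marg_snd Q)"
        using U_div_prod_channel_product[OF W1 W2 P] product_of_marginals[of Q Q]
        by (force intro: is_distr_marg_fst is_distr_marg_snd)
    qed
    show "(INF Q\<in>{Q. is_distr Q}. U_div W1 (marg_fst P) (marg_fst Q) + U_div W2 (marg_snd P) (marg_snd Q))
        \<le> (INF Q\<in>{Q. is_distr Q}. U_div (prod_channel W1 W2) P Q)"
      using U_div_prod_channel_ge[OF W1 W2 P] by (intro INF_mono) auto
  qed
  also have "\<dots> = U_inf W1 (marg_fst P) + U_inf W2 (marg_snd P)"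
    unfolding U_inf_def using W1 W2 P
    by (intro INF_marginals_add) (auto intro: U_div_nonneg is_distr_marg_fst is_distr_marg_snd)
  finally show ?thesis .
qed

theorem mainTheorem7:
  fixes W1 :: "'x1::finite \<Rightarrow> 'y1::finite \<Rightarrow> real"
    and W2 :: "'x2::finite \<Rightarrow> 'y2::finite \<Rightarrow> real"
  assumes "is_channel W1" and "is_channel W2"
  shows "U_channel (prod_channel W1 W2) = U_channel W1 + U_channel W2"
proof -
  have "U_channel (prod_channel W1 W2)
      = (SUP P\<in>{P. is_distr P}. U_inf W1 (marg_fst P) + U_inf W2 (marg_snd P))"
    unfolding U_channel_eq_SUP_U_inf using assms by (intro SUP_cong) (auto simp: U_inf_prod_channel)
  also have "\<dots> = U_channel W1 + U_channel W2"
    unfolding U_channel_eq_SUP_U_inf using assms by (intro SUP_marginals_add) (auto intro: U_inf_nonneg)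
  finally show ?thesis .
qed

end
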